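(* Let $X,Y,Z$ be shift spaces, $\phi_1 : X \to Z$ and $\phi_2 : Y \to Z$ codes, and let $\Sigma = \{(x,y) \in X \times Y : \phi_1(x) = \phi_2(y)\}$ with $\psi_1 : \Sigma \to X$, $\psi_1(x,y)=x$, and $\psi_2 : \Sigma \to Y$, $\psi_2(x,y) = y$. Then: (1) If $\phi_1$ is open, then $\psi_2$ is open. (2) If $\phi_2$ is onto and $\psi_2$ is open, then $\phi_1$ is open.
   Context: Shift spaces are closed shift-invariant subsets of $\mathcal{A}^{\mathbb{Z}}$; a code is a continuous shift-commuting map. $\Sigma$ (with coordinatewise shift) is a shift space, called the fiber product. Open: images of open sets are open. *)

theory Defs
  imports "HOL-Analysis.Analysis"
begin

definition shift :: "(int \<Rightarrow> 'a) \<Rightarrow> (int \<Rightarrow> 'a)" where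
  "shift x = (\<lambda>i. x (i + 1))"

definition full_shift_top :: "'a set \<Rightarrow> (int \<Rightarrow> 'a) topology" where
  "full_shift_top A = product_topology (\<lambda>_. discrete_topology A) UNIV"

definition shift_space :: "'a set \<Rightarrow> (int \<Rightarrow> 'a) set \<Rightarrow> bool" where
  "shift_space A X \<longleftrightarrow> finite A \<and> closedin (full_shift_top A) X \<and> shift ` X = X"

definition shift_top :: "'a set \<Rightarrow> (int \<Rightarrow> 'a) set \<Rightarrow> (int \<Rightarrow> 'a) topology" where
  "shift_top A X = subtopology (full_shift_top A) X"

definition is_code :: "'a set \<Rightarrow> (int \<Rightarrow> 'a) set \<Rightarrow> 'b set \<Rightarrow> (int \<Rightarrow> 'b) set
    \<Rightarrow> ((int \<Rightarrow> 'a) \<Rightarrow> (int \<Rightarrow> 'b)) \<Rightarrow> bool" where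
  "is_code A X B Y \<phi> \<longleftrightarrow> \<phi> ` X \<subseteq> Y
     \<and> continuous_map (shift_top A X) (shift_top B Y) \<phi>
     \<and> (\<forall>x\<in>X. \<phi> (shift x) = shift (\<phi> x))"

text \<open>Fiber product and its topology (the product topology on X \<times> Y restricted to it;
  this is the topology of the shift space of pairs under the obvious identification).\<close>
definition fiber_product :: "(int \<Rightarrow> 'a) set \<Rightarrow> (int \<Rightarrow> 'b) set
    \<Rightarrow> ((int \<Rightarrow> 'a) \<Rightarrow> 'z) \<Rightarrow> ((int \<Rightarrow> 'b) \<Rightarrow> 'z) \<Rightarrow> ((int \<Rightarrow> 'a) \<times> (int \<Rightarrow> 'b)) set" where
  "fiber_product X Y \<phi>1 \<phi>2 = {(x, y). x \<in> X \<and> y \<in> Y \<and> \<phi>1 x = \<phi>2 y}"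

definition fiber_top :: "'a set \<Rightarrow> (int \<Rightarrow> 'a) set \<Rightarrow> 'b set \<Rightarrow> (int \<Rightarrow> 'b) set
    \<Rightarrow> ((int \<Rightarrow> 'a) \<Rightarrow> 'z) \<Rightarrow> ((int \<Rightarrow> 'b) \<Rightarrow> 'z) \<Rightarrow> ((int \<Rightarrow> 'a) \<times> (int \<Rightarrow> 'b)) topology" where
  "fiber_top A X B Y \<phi>1 \<phi>2 =
     subtopology (prod_topology (shift_top A X) (shift_top B Y)) (fiber_product X Y \<phi>1 \<phi>2)"

end

theory Submission
  imports Defs
begin

text \<open>Both parts are statements about pullbacks of arbitrary topological spaces. The projection
  of the pullback maps a basic open set \<open>(U \<times> V) \<inter> \<Sigma>\<close> onto \<open>V \<inter> \<phi>\<^sub>2\<inverse>(\<phi>\<^sub>1 U)\<close>; hence it is open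
  whenever \<open>\<phi>\<^sub>1\<close> is open. Conversely, with \<open>V = Y\<close> this says that \<open>\<phi>\<^sub>2\<inverse>(\<phi>\<^sub>1 U)\<close> is open
  whenever the projection is open, and an onto code is a quotient map, being a continuous
  surjection from a compact space onto a Hausdorff space.\<close>

definition pullback_topology ::
    "'a topology \<Rightarrow> 'b topology \<Rightarrow> ('a \<Rightarrow> 'c) \<Rightarrow> ('b \<Rightarrow> 'c) \<Rightarrow> ('a \<times> 'b) topology" where
  "pullback_topology X Y f g = subtopology (prod_topology X Y) {(x, y). f x = g y}"

lemma snd_image_Times_pullback:
  "snd ` ((U \<times> V) \<inter> {(x, y). f x = g y}) = {y \<in> V. g y \<in> f ` U}"
  by force

lemma open_map_pullback_snd:
  assumes f: "open_map X Z f" and g: "continuous_map Y Z g"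
  shows "open_map (pullback_topology X Y f g) Y snd"
  unfolding open_map_def
proof (intro allI impI)
  fix W assume "openin (pullback_topology X Y f g) W"
  then obtain P where P: "openin (prod_topology X Y) P" and W: "W = P \<inter> {(x, y). f x = g y}"
    unfolding pullback_topology_def openin_subtopology by blast
  show "openin Y (snd ` W)"
  proof (subst openin_subopen, intro ballI)
    fix y assume "y \<in> snd ` W"
    then obtain x where "(x, y) \<in> P" "f x = g y" using W by force
    then obtain U V where U: "openin X U" and V: "openin Y V"
      and xy: "x \<in> U" "y \<in> V" and UV: "U \<times> V \<subseteq> P"
      using P openin_prod_topology_alt by metis
    let ?T = "snd ` ((U \<times> V) \<inter> {(x, y). f x = g y})"
    have "openin Z (f ` U)" using f U unfolding open_map_def by blast
    then have "openin Y {y \<in> topspace Y. g y \<in> f ` U}"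
      by (rule openin_continuous_map_preimage[OF g])
    moreover have "?T = V \<inter> {y \<in> topspace Y. g y \<in> f ` U}"
      unfolding snd_image_Times_pullback using openin_subset[OF V] by blast
    ultimately have "openin Y ?T" using V by auto
    moreover have "y \<in> ?T" using xy \<open>f x = g y\<close> by force
    moreover have "?T \<subseteq> snd ` W" using UV W by blast
    ultimately show "\<exists>T. openin Y T \<and> y \<in> T \<and> T \<subseteq> snd ` W" by blast
  qed
qed

lemma open_map_through_quotient_pullback:
  assumes g: "quotient_map Y Z g" and f: "f ` topspace X \<subseteq> topspace Z"
    and snd: "open_map (pullback_topology X Y f g) Y snd"
  shows "open_map X Z f"
  unfolding open_map_def
proof (intro allI impI)
  fix U assume U: "openin X U"
  then have "openin (prod_topology X Y) (U \<times> topspace Y)"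
    by (simp add: openin_prod_Times_iff)
  then have "openin (pullback_topology X Y f g) ((U \<times> topspace Y) \<inter> {(x, y). f x = g y})"
    unfolding pullback_topology_def by (blast intro: openin_subtopology_Int)
  then have "openin Y (snd ` ((U \<times> topspace Y) \<inter> {(x, y). f x = g y}))"
    using snd unfolding open_map_def by blast
  then have "openin Y {y \<in> topspace Y. g y \<in> f ` U}"
    unfolding snd_image_Times_pullback .
  moreover have "f ` U \<subseteq> topspace Z" using U f openin_subset by blast
  ultimately show "openin Z (f ` U)" using g unfolding quotient_map_def by blast
qed

lemma topspace_shift_top:
  assumes "shift_space A X" shows "topspace (shift_top A X) = X"
  using assms closedin_subset unfolding shift_space_def shift_top_def by fastforce

lemma compact_space_shift_top:
  assumes "shift_space A X" shows "compact_space (shift_top A X)"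
proof -
  have "compact_space (full_shift_top A)"
    using assms unfolding shift_space_def full_shift_top_def
    by (simp add: compact_space_product_topology compact_space_discrete_topology)
  then have "compactin (full_shift_top A) X"
    using assms closedin_compact_space unfolding shift_space_def by blast
  then show ?thesis unfolding shift_top_def by (rule compact_space_subtopology)
qed

lemma Hausdorff_space_shift_top: "Hausdorff_space (shift_top A X)"
  unfolding shift_top_def full_shift_top_def
  by (intro Hausdorff_space_subtopology) (simp add: Hausdorff_space_product_topology)

lemma quotient_map_onto_code:
  assumes "shift_space A X" "shift_space B Y" "is_code A X B Y \<phi>" "\<phi> ` X = Y"
  shows "quotient_map (shift_top A X) (shift_top B Y) \<phi>"
proof -
  have \<phi>: "continuous_map (shift_top A X) (shift_top B Y) \<phi>"
    using assms(3) unfolding is_code_def by blast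
  then have "closed_map (shift_top A X) (shift_top B Y) \<phi>"
    using continuous_imp_closed_map_gen compact_space_shift_top[OF assms(1)]
      Hausdorff_imp_kc_space[OF Hausdorff_space_shift_top] by blast
  with \<phi> show ?thesis
    using assms continuous_closed_imp_quotient_map topspace_shift_top by metis
qed

lemma fiber_top_eq_pullback_topology:
  assumes "shift_space A X" "shift_space B Y"
  shows "fiber_top A X B Y \<phi>1 \<phi>2 = pullback_topology (shift_top A X) (shift_top B Y) \<phi>1 \<phi>2"
proof -
  have "fiber_product X Y \<phi>1 \<phi>2
      = topspace (prod_topology (shift_top A X) (shift_top B Y)) \<inter> {(x, y). \<phi>1 x = \<phi>2 y}"
    using assms by (auto simp: fiber_product_def topspace_shift_top)
  then show ?thesis
    unfolding fiber_top_def pullback_topology_def by (metis subtopology_restrict)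
qed

theorem lemma2p4:
  fixes A :: "'a set" and B :: "'b set" and C :: "'c set"
    and X :: "(int \<Rightarrow> 'a) set" and Y :: "(int \<Rightarrow> 'b) set" and Z :: "(int \<Rightarrow> 'c) set"
    and \<phi>1 :: "(int \<Rightarrow> 'a) \<Rightarrow> (int \<Rightarrow> 'c)" and \<phi>2 :: "(int \<Rightarrow> 'b) \<Rightarrow> (int \<Rightarrow> 'c)"
  assumes "shift_space A X" and "shift_space B Y" and "shift_space C Z"
    and "is_code A X C Z \<phi>1" and "is_code B Y C Z \<phi>2"
  shows "(open_map (shift_top A X) (shift_top C Z) \<phi>1
            \<longrightarrow> open_map (fiber_top A X B Y \<phi>1 \<phi>2) (shift_top B Y) snd)
       \<and> (\<phi>2 ` Y = Z \<and> open_map (fiber_top A X B Y \<phi>1 \<phi>2) (shift_top B Y) snd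
            \<longrightarrow> open_map (shift_top A X) (shift_top C Z) \<phi>1)"
proof -
  have \<Sigma>: "fiber_top A X B Y \<phi>1 \<phi>2 = pullback_topology (shift_top A X) (shift_top B Y) \<phi>1 \<phi>2"
    using assms(1,2) by (rule fiber_top_eq_pullback_topology)
  have \<phi>1: "\<phi>1 ` topspace (shift_top A X) \<subseteq> topspace (shift_top C Z)"
    using assms(1,3,4) by (simp add: is_code_def topspace_shift_top)
  have \<phi>2: "continuous_map (shift_top B Y) (shift_top C Z) \<phi>2"
    using assms(5) by (simp add: is_code_def)
  show ?thesis
    unfolding \<Sigma>
    using open_map_pullback_snd[OF _ \<phi>2] open_map_through_quotient_pullback[OF _ \<phi>1]
      quotient_map_onto_code[OF assms(2,3,5)] by blast
qed

end
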